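(* Let $\delta=\delta_1^{x_1}\cdots\delta_n^{x_n}$ with distinct primes $\delta_i$, and let $f$ be a function on $2\times2$ rational matrices. Writing elements of $\mathbb{M}_\delta$ as $A=\begin{pmatrix} n_1&l_1\\ n_2&\tfrac1\delta l_2\end{pmatrix}$, it holds, at least as a formal sum, $$\sum_{\substack{A\in\mathbb{M}_\delta,\ \det A\neq0\\ \delta_1\nmid l_2\,\wedge\dots\wedge\,\delta_n\nmid l_2}}f(A)=\sum_{l=0}^{n}(-1)^l\sum_{\delta^{(l)}\in\mathcal{C}_l(\delta)}\ \sum_{\substack{k,j,p\in\mathbb{Z}\\ k>j\ge0,\ p\neq0}}\ \sum_{P\in\Gamma_0(\delta)}f\left(\begin{pmatrix}k&j\\0&\frac{\delta^{(l)}}{\delta}p\end{pmatrix}\cdot P\right).$$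
   Context: $\mathbb{M}_\delta=\{\begin{pmatrix} n_1&l_1\\ n_2&\tfrac1\delta l_2\end{pmatrix}: n_1,n_2,l_1,l_2\in\mathbb{Z}\}$. $\Gamma_0(\delta)=\{\begin{pmatrix}a&b\\ \delta c&d\end{pmatrix}\in\mathrm{SL}(2,\mathbb{Z})\}$. $\mathcal{C}_l(\delta)$ is the set of all products of $l$ distinct prime factors of $\delta$, with $\mathcal{C}_0(\delta)=\{1\}$; the product $\cdot$ is matrix multiplication. *)

theory Defs
  imports "HOL-Analysis.Analysis"
begin

type_synonym qmat = "rat^2^2"

definition mat2 :: "rat \<Rightarrow> rat \<Rightarrow> rat \<Rightarrow> rat \<Rightarrow> qmat" where
  "mat2 a b c d = (\<chi> i j. if i = 1 then (if j = 1 then a else b) else (if j = 1 then c else d))"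

definition LHS_set :: "nat \<Rightarrow> qmat set" where
  "LHS_set \<delta> = {A. \<exists>n1 l1 n2 l2 :: int.
      A = mat2 (of_int n1) (of_int l1) (of_int n2) (of_int l2 / of_nat \<delta>)
      \<and> det A \<noteq> 0 \<and> (\<forall>q \<in> prime_factors \<delta>. \<not> int q dvd l2)}"

definition C_set :: "nat \<Rightarrow> nat \<Rightarrow> nat set" where
  "C_set l \<delta> = {\<Prod>S | S. S \<subseteq> prime_factors \<delta> \<and> card S = l}"

definition Gamma0 :: "nat \<Rightarrow> qmat set" where
  "Gamma0 \<delta> = {mat2 (of_int a) (of_int b) (of_int (int \<delta> * c)) (of_int d) | a b c d :: int.
      a * d - b * (int \<delta> * c) = 1}"

text \<open>Index tuples (k,j,p,P) of the right-hand side (for fixed delta^(l) = d)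
  whose term is f(M).\<close>
definition reps :: "nat \<Rightarrow> nat \<Rightarrow> qmat \<Rightarrow> (int \<times> int \<times> int \<times> qmat) set" where
  "reps \<delta> d M = {(k, j, p, P). k > j \<and> j \<ge> 0 \<and> p \<noteq> 0 \<and> P \<in> Gamma0 \<delta> \<and>
      mat2 (of_int k) (of_int j) 0 (of_nat d / of_nat \<delta> * of_int p) ** P = M}"

end

theory Submission
  imports Defs "HOL-Computational_Algebra.Primes"
begin

(* Write M = (n1, l1; n2, l2/delta) and d = delta^(l). A term of the right-hand side is a
   factorization M = (k, j; 0, d p/delta) P with P = (a, b; delta c, e) in Gamma0(delta), i.e.
   (n2, l2) = d p (c, e) and (n1, l1) = k (a, b) + j (delta c, e). The row (delta c, e) is
   primitive, so |d p| = gcd (delta n2, l2); the determinant n1 l2 - delta l1 n2 equals d p k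
   with k > 0, which fixes the sign of d p; and (k, j, a, b) is the Hermite reduction of the top
   row against (delta c, e), unique once 0 <= j < k. Hence the factorization exists iff
   det M <> 0, gcd (delta n2, l2) divides n2 and d divides l2, and it is then unique. Summing
   (-1)^l over the squarefree d | delta by inclusion-exclusion leaves 1 exactly when no prime
   factor of delta divides l2, and then l2 is coprime to delta, so the gcd condition is automatic. *)

lemma prod_primes_dvd_iff:
  fixes S :: "nat set"
  assumes "finite S" "\<And>p. p \<in> S \<Longrightarrow> prime p"
  shows "\<Prod>S dvd n \<longleftrightarrow> (\<forall>p\<in>S. p dvd n)"
  using assms
proof (induction S rule: finite_induct)
  case (insert p S)
  have "coprime p (\<Prod>S)"
    using insert by (metis insert_iff prime_dvd_prod_iff prime_imp_coprime primes_dvd_imp_eq)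
  then show ?case
    using insert by (auto intro: divides_mult dest: dvd_mult_left dvd_mult_right)
qed simp

lemma prime_factors_prod_primes:
  fixes S :: "nat set"
  assumes "finite S" "\<And>p. p \<in> S \<Longrightarrow> prime p"
  shows "prime_factors (\<Prod>S) = S"
proof -
  have "0 \<notin> S"
    using assms(2) by fastforce
  then show ?thesis
    using assms by (simp add: prime_factors_prod prime_prime_factors)
qed

lemma int_prod_primes_dvd_iff:
  fixes S :: "nat set" and L :: int
  assumes "finite S" "\<And>p. p \<in> S \<Longrightarrow> prime p"
  shows "int (\<Prod>S) dvd L \<longleftrightarrow> (\<forall>p\<in>S. int p dvd L)"
  using prod_primes_dvd_iff[OF assms, of "nat \<bar>L\<bar>"] by simp

lemma prod_subset_prime_factors:
  fixes n :: nat
  assumes "n > 0" "S \<subseteq> prime_factors n"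
  shows "\<Prod>S > 0" "\<Prod>S dvd n"
proof -
  have S: "finite S" "\<And>p. p \<in> S \<Longrightarrow> prime p"
    using assms(2) finite_subset by auto
  then show "\<Prod>S > 0"
    by (simp add: prime_gt_0_nat prod_pos)
  show "\<Prod>S dvd n"
    using assms by (subst prod_primes_dvd_iff[OF S]) auto
qed

lemma coprime_if_no_prime_factor_dvd:
  fixes n :: nat and L :: int
  assumes "n > 0" "\<And>q. q \<in> prime_factors n \<Longrightarrow> \<not> int q dvd L"
  shows "coprime L (int n)"
proof (rule coprimeI)
  fix c
  assume c: "c dvd L" "c dvd int n"
  show "is_unit c"
  proof (rule ccontr)
    assume "\<not> is_unit c"
    then have "nat \<bar>c\<bar> \<noteq> 1"
      by auto
    then obtain q where q: "prime q" "q dvd nat \<bar>c\<bar>"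
      using prime_factor_nat by blast
    then have "int q dvd c"
      by simp
    then have "int q dvd int n" "int q dvd L"
      using c dvd_trans by blast+
    with q(1) assms show False
      by (simp add: in_prime_factors_iff)
  qed
qed

lemma sum_C_set_eq_sum_Pow:
  fixes h :: "nat \<Rightarrow> 'a :: comm_ring_1"
  shows "(\<Sum>l\<le>card (prime_factors \<delta>). (-1) ^ l * (\<Sum>d\<in>C_set l \<delta>. h d))
       = (\<Sum>S\<in>Pow (prime_factors \<delta>). (-1) ^ card S * h (\<Prod>S))"
proof -
  let ?P = "prime_factors \<delta>"
  have "prime_factors (\<Prod>S) = S" if "S \<in> Pow ?P" for S
    using that by (intro prime_factors_prod_primes) (auto intro: finite_subset)
  then have inj: "inj_on Prod (Pow ?P)"
    by (rule inj_on_inverseI)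
  have "(-1) ^ l * (\<Sum>d\<in>C_set l \<delta>. h d) =
      (\<Sum>S | S \<in> Pow ?P \<and> card S = l. (-1) ^ card S * h (\<Prod>S))"
    for l
  proof -
    have "C_set l \<delta> = Prod ` {S. S \<in> Pow ?P \<and> card S = l}"
      unfolding C_set_def by auto
    moreover have "inj_on Prod {S. S \<in> Pow ?P \<and> card S = l}"
      by (rule inj_on_subset[OF inj]) auto
    ultimately show ?thesis
      by (simp add: sum.reindex sum_distrib_left)
  qed
  then have "(\<Sum>l\<le>card ?P. (-1) ^ l * (\<Sum>d\<in>C_set l \<delta>. h d))
      = (\<Sum>l\<le>card ?P. \<Sum>S | S \<in> Pow ?P \<and> card S = l. (-1) ^ card S * h (\<Prod>S))"
    by simp
  also have "\<dots> = (\<Sum>S\<in>Pow ?P. (-1) ^ card S * h (\<Prod>S))"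
    by (rule sum.group) (auto intro: card_mono)
  finally show ?thesis .
qed

lemma sum_Pow_minus_one_card_subset:
  fixes P T :: "'b set"
  assumes "finite P"
  shows "(\<Sum>S\<in>Pow P. (-1) ^ card S * (if S \<subseteq> T then 1 else 0)) =
    (if P \<inter> T = {} then 1 else (0 :: 'a :: comm_ring_1))"
proof -
  have "(\<Sum>S\<in>Pow P. (-1) ^ card S * (if S \<subseteq> T then 1 else 0)) =
      (\<Sum>S\<in>Pow (P \<inter> T). (-1) ^ card S :: 'a)"
    by (rule sum.mono_neutral_cong_right) (auto simp: assms)
  also have "\<dots> = (\<Prod>x\<in>P \<inter> T. 1 - 1)"
    using prod_diff_conv_sum[of "P \<inter> T" "\<lambda>_. 1::'a" "\<lambda>_. 1"] assms by simp
  also have "\<dots> = (if P \<inter> T = {} then 1 else 0)"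
    using assms by (simp add: power_0_left)
  finally show ?thesis .
qed

lemma coprime_if_det_eq_1:
  fixes a b u w :: int
  assumes "a * w - b * u = 1"
  shows "coprime u w"
proof (rule coprimeI)
  fix c
  assume "c dvd u" "c dvd w"
  then have "c dvd a * w - b * u"
    by simp
  then show "is_unit c"
    using assms by simp
qed

lemma eq_of_primitive_multiples:
  fixes x x' u u' w w' k k' :: int
  assumes "coprime u w" "coprime u' w'" "x * u = x' * u'" "x * w = x' * w'"
    and "x * k = x' * k'" "k > 0" "k' > 0"
  shows "x = x'"
proof -
  have "\<bar>x\<bar> = gcd (x * u) (x * w)"
    using assms(1) by (simp add: gcd_mult_left)
  also have "\<dots> = \<bar>x'\<bar>"
    using assms(2-4) by (simp add: gcd_mult_left)
  finally have abs: "\<bar>x\<bar> = \<bar>x'\<bar>" .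
  have "sgn x = sgn (x * k)"
    using assms(6) by (simp add: sgn_mult)
  also have "\<dots> = sgn (x' * k')"
    by (simp only: assms(5))
  also have "\<dots> = sgn x'"
    using assms(7) by (simp add: sgn_mult)
  finally show ?thesis
    using abs by (metis sgn_mult_abs)
qed

lemma primitive_factorization_of_row:
  fixes x y z \<delta> :: int
  assumes "\<bar>x\<bar> = gcd (\<delta> * y) z" "x dvd y" "x \<noteq> 0"
  shows "\<exists>c e. y = x * c \<and> z = x * e \<and> coprime (\<delta> * c) e"
proof -
  obtain c where c: "y = x * c"
    using assms(2) ..
  have "\<bar>x\<bar> dvd z"
    unfolding assms(1) by simp
  then have "x dvd z"
    by simp
  then obtain e where e: "z = x * e" ..
  have "\<bar>x\<bar> * 1 = gcd (\<delta> * y) z"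
    using assms(1) by simp
  also have "\<dots> = gcd (x * (\<delta> * c)) (x * e)"
    unfolding c e by (simp add: ac_simps)
  also have "\<dots> = \<bar>x\<bar> * gcd (\<delta> * c) e"
    by (simp add: gcd_mult_left abs_mult)
  finally have "coprime (\<delta> * c) e"
    using assms(3) by (simp add: coprime_iff_gcd_eq_1)
  with c e show ?thesis
    by blast
qed

lemma hermite_top_row_unique:
  fixes k j j' a a' b b' u w :: int
  assumes "coprime u w" "0 \<le> j" "j < k" "0 \<le> j'" "j' < k"
    and "k * a + j * u = k * a' + j' * u" "k * b + j * w = k * b' + j' * w"
  shows "j = j' \<and> a = a' \<and> b = b'"
proof -
  have ka: "k * (a - a') = (j' - j) * u" and kb: "k * (b - b') = (j' - j) * w"
    using assms(6,7) by (simp_all add: algebra_simps)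
  then have "k dvd gcd ((j' - j) * u) ((j' - j) * w)"
    by (metis dvd_triv_left gcd_greatest)
  also have "gcd ((j' - j) * u) ((j' - j) * w) = \<bar>j' - j\<bar>"
    using assms(1) by (simp add: gcd_mult_left)
  finally have "k dvd j' - j"
    by simp
  moreover have "\<bar>j' - j\<bar> < \<bar>k\<bar>"
    using assms(2-5) by arith
  ultimately have "j = j'"
    using dvd_imp_le_int[of "j' - j" k] by fastforce
  moreover from \<open>j = j'\<close> have "a = a'" "b = b'"
    using ka kb assms(2,3) by simp_all
  ultimately show ?thesis
    by simp
qed

lemma hermite_top_row_exists:
  fixes n1 l1 k u w :: int
  assumes "coprime u w" "n1 * w - l1 * u = k" "k > 0"
  shows "\<exists>a b j. a * w - b * u = 1 \<and> 0 \<le> j \<and> j < k \<and> k * a + j * u = n1 \<and> k * b + j * w = l1"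
proof -
  obtain a0 b0 where bez: "a0 * w - b0 * u = 1"
  proof -
    obtain s t where "s * w + t * u = 1"
      using bezout_int[of w u] assms(1) by (auto simp: coprime_commute)
    then show thesis
      using that[of s "- t"] by simp
  qed
  \<comment> \<open>shift the Bezout solution along (u, w) so that j = l1 a - n1 b lands in [0, k)\<close>
  define m where "m = l1 * a0 - n1 * b0"
  define j where "j = m mod k"
  define a where "a = a0 + (m div k) * u"
  define b where "b = b0 + (m div k) * w"
  have m: "k * (m div k) + j = m"
    unfolding j_def by (rule mult_div_mod_eq)
  have "k * a + j * u = k * a0 + (k * (m div k) + j) * u"
    unfolding a_def by (simp add: algebra_simps)
  also have "\<dots> = k * a0 + m * u"
    by (simp only: m)
  also have "\<dots> = n1 * (a0 * w - b0 * u)"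
    unfolding m_def assms(2)[symmetric] by (simp add: algebra_simps)
  finally have n1: "k * a + j * u = n1"
    using bez by simp
  have "k * b + j * w = k * b0 + (k * (m div k) + j) * w"
    unfolding b_def by (simp add: algebra_simps)
  also have "\<dots> = k * b0 + m * w"
    by (simp only: m)
  also have "\<dots> = l1 * (a0 * w - b0 * u)"
    unfolding m_def assms(2)[symmetric] by (simp add: algebra_simps)
  finally have l1: "k * b + j * w = l1"
    using bez by simp
  have "a * w - b * u = 1"
    using bez by (simp add: a_def b_def algebra_simps)
  moreover have "0 \<le> j" "j < k"
    using assms(3) by (simp_all add: j_def)
  ultimately show ?thesis
    using n1 l1 by blast
qed

lemma mat2_nth:
  "mat2 a b c d $ 1 $ 1 = a" "mat2 a b c d $ 1 $ 2 = b"
  "mat2 a b c d $ 2 $ 1 = c" "mat2 a b c d $ 2 $ 2 = d"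
  by (simp_all add: mat2_def)

lemma mat2_eq_iff:
  "mat2 a b c d = mat2 a' b' c' d' \<longleftrightarrow> a = a' \<and> b = b' \<and> c = c' \<and> d = d'"
  by (metis mat2_nth)

lemma mat2_mult:
  "mat2 a b c d ** mat2 a' b' c' d' =
     mat2 (a * a' + b * c') (a * b' + b * d') (c * a' + d * c') (c * b' + d * d')"
  unfolding matrix_matrix_mult_def by (simp add: vec_eq_iff mat2_def sum_2 forall_2)

definition mdelta :: "nat \<Rightarrow> int \<Rightarrow> int \<Rightarrow> int \<Rightarrow> int \<Rightarrow> qmat" where
  "mdelta \<delta> n1 l1 n2 l2 = mat2 (of_int n1) (of_int l1) (of_int n2) (of_int l2 / of_nat \<delta>)"

lemma mdelta_eq_iff:
  assumes "\<delta> > 0"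
  shows "mdelta \<delta> n1 l1 n2 l2 = mdelta \<delta> n1' l1' n2' l2' \<longleftrightarrow>
    n1 = n1' \<and> l1 = l1' \<and> n2 = n2' \<and> l2 = l2'"
  using assms by (simp add: mdelta_def mat2_eq_iff)

lemma det_mdelta_eq_0_iff:
  assumes "\<delta> > 0"
  shows "det (mdelta \<delta> n1 l1 n2 l2) = 0 \<longleftrightarrow> n1 * l2 - int \<delta> * l1 * n2 = 0"
proof -
  have "det (mdelta \<delta> n1 l1 n2 l2) = of_int (n1 * l2 - int \<delta> * l1 * n2) / of_nat \<delta>"
    using assms by (simp add: mdelta_def det_2 mat2_nth field_simps)
  then show ?thesis
    using assms by (simp only: divide_eq_0_iff of_int_eq_0_iff of_nat_eq_0_iff) simp
qed

lemma triangular_times_Gamma0: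
  assumes "\<delta> > 0"
  shows "mat2 (of_int k) (of_int j) 0 (of_nat d / of_nat \<delta> * of_int p) **
           mat2 (of_int a) (of_int b) (of_int (int \<delta> * c)) (of_int e) =
         mdelta \<delta> (k * a + j * (int \<delta> * c)) (k * b + j * e) (int d * p * c) (int d * p * e)"
  using assms by (simp add: mdelta_def mat2_mult mat2_eq_iff field_simps)

lemma mem_LHS_set_iff:
  assumes "\<delta> > 0"
  shows "M \<in> LHS_set \<delta> \<longleftrightarrow> (\<exists>n1 l1 n2 l2. M = mdelta \<delta> n1 l1 n2 l2 \<and>
     n1 * l2 - int \<delta> * l1 * n2 \<noteq> 0 \<and> (\<forall>q \<in> prime_factors \<delta>. \<not> int q dvd l2))"
  unfolding LHS_set_def mdelta_def[symmetric] mem_Collect_eq using det_mdelta_eq_0_iff[OF assms] by blast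

lemma mem_reps_iff:
  assumes "\<delta> > 0"
  shows "(k, j, p, P) \<in> reps \<delta> d M \<longleftrightarrow> 0 \<le> j \<and> j < k \<and> p \<noteq> 0 \<and>
    (\<exists>a b c e. a * e - b * (int \<delta> * c) = 1 \<and>
       P = mat2 (of_int a) (of_int b) (of_int (int \<delta> * c)) (of_int e) \<and>
       M = mdelta \<delta> (k * a + j * (int \<delta> * c)) (k * b + j * e) (int d * p * c) (int d * p * e))"
  unfolding reps_def Gamma0_def mem_Collect_eq prod.case
  using triangular_times_Gamma0[OF assms] by blast

definition hermite_reducible :: "nat \<Rightarrow> qmat \<Rightarrow> int \<Rightarrow> bool" where
  "hermite_reducible \<delta> M L \<longleftrightarrow> (\<exists>n1 l1 n2. M = mdelta \<delta> n1 l1 n2 L \<and>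
     n1 * L - int \<delta> * l1 * n2 \<noteq> 0 \<and> gcd (int \<delta> * n2) L dvd n2)"

lemma hermite_reducible_unique:
  assumes "\<delta> > 0" "hermite_reducible \<delta> M L" "hermite_reducible \<delta> M L'"
  shows "L = L'"
  using assms by (auto simp: hermite_reducible_def mdelta_eq_iff)

lemma mem_LHS_set_iff_hermite_reducible:
  assumes "\<delta> > 0"
  shows "M \<in> LHS_set \<delta> \<longleftrightarrow>
    (\<exists>L. hermite_reducible \<delta> M L \<and> (\<forall>q \<in> prime_factors \<delta>. \<not> int q dvd L))"
proof
  assume "M \<in> LHS_set \<delta>"
  then obtain n1 l1 n2 L where M: "M = mdelta \<delta> n1 l1 n2 L" "n1 * L - int \<delta> * l1 * n2 \<noteq> 0"
    and L: "\<forall>q \<in> prime_factors \<delta>. \<not> int q dvd L"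
    using mem_LHS_set_iff[OF assms] by blast
  have "coprime L (int \<delta>)"
    using assms L by (intro coprime_if_no_prime_factor_dvd) auto
  then have "gcd (int \<delta> * n2) L dvd n2"
    by (simp add: gcd_mult_left_left_cancel)
  with M L show "\<exists>L. hermite_reducible \<delta> M L \<and> (\<forall>q \<in> prime_factors \<delta>. \<not> int q dvd L)"
    unfolding hermite_reducible_def by blast
next
  assume "\<exists>L. hermite_reducible \<delta> M L \<and> (\<forall>q \<in> prime_factors \<delta>. \<not> int q dvd L)"
  then show "M \<in> LHS_set \<delta>"
    unfolding hermite_reducible_def mem_LHS_set_iff[OF assms] by blast
qed

lemma hermite_bottom_row_exists:
  fixes n1 l1 n2 L \<delta> :: int
  assumes "n1 * L - \<delta> * l1 * n2 \<noteq> 0" "gcd (\<delta> * n2) L dvd n2"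
  shows "\<exists>x c e. \<bar>x\<bar> = gcd (\<delta> * n2) L \<and> n2 = x * c \<and> L = x * e \<and> coprime (\<delta> * c) e \<and>
    n1 * e - l1 * (\<delta> * c) > 0"
proof -
  define D where "D = n1 * L - \<delta> * l1 * n2"
  define g where "g = gcd (\<delta> * n2) L"
  have "D \<noteq> 0"
    using assms(1) by (simp add: D_def)
  have "g > 0"
    using assms(1) by (auto simp: g_def)
  define x where "x = sgn D * g"
  have x: "\<bar>x\<bar> = g" "x dvd n2" "x \<noteq> 0"
    using \<open>D \<noteq> 0\<close> \<open>g > 0\<close> assms(2) by (simp_all add: x_def abs_mult g_def sgn_0_0)
  then obtain c e where ce: "n2 = x * c" "L = x * e" "coprime (\<delta> * c) e"
    using primitive_factorization_of_row[of x \<delta> n2 L] unfolding g_def by blast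
  define k where "k = n1 * e - l1 * (\<delta> * c)"
  have "x * k = D"
    by (simp add: D_def k_def ce(1,2) algebra_simps)
  then have "g * k = \<bar>D\<bar>"
    using \<open>D \<noteq> 0\<close> by (auto simp: x_def sgn_if split: if_splits)
  then have "k > 0"
    using \<open>g > 0\<close> \<open>D \<noteq> 0\<close> zero_less_mult_pos[of g k] by simp
  with x ce show ?thesis
    unfolding k_def g_def by blast
qed

lemma reps_det:
  assumes "\<delta> > 0" "(k, j, p, P) \<in> reps \<delta> d M" "M = mdelta \<delta> n1 l1 n2 L"
  shows "n1 * L - int \<delta> * l1 * n2 = int d * p * k"
proof -
  obtain a b c e where det: "a * e - b * (int \<delta> * c) = 1"
    and "M = mdelta \<delta> (k * a + j * (int \<delta> * c)) (k * b + j * e) (int d * p * c) (int d * p * e)"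
    using assms(2) mem_reps_iff[OF assms(1)] by blast
  then have "n1 = k * a + j * (int \<delta> * c)" "l1 = k * b + j * e" "n2 = int d * p * c" "L = int d * p * e"
    using assms(3) by (simp_all add: mdelta_eq_iff[OF assms(1)])
  then have "n1 * L - int \<delta> * l1 * n2 = int d * p * k * (a * e - b * (int \<delta> * c))"
    by (simp add: algebra_simps)
  with det show ?thesis
    by simp
qed

lemma reps_imp_hermite_reducible:
  assumes "\<delta> > 0" "d > 0" "(k, j, p, P) \<in> reps \<delta> d M"
  shows "\<exists>L. hermite_reducible \<delta> M L \<and> int d dvd L"
proof -
  obtain a b c e where kjp: "0 \<le> j" "j < k" "p \<noteq> 0" and det: "a * e - b * (int \<delta> * c) = 1"
    and M: "M = mdelta \<delta> (k * a + j * (int \<delta> * c)) (k * b + j * e) (int d * p * c) (int d * p * e)"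
    using assms(3) mem_reps_iff[OF assms(1)] by blast
  have "coprime (int \<delta> * c) e"
    using det by (rule coprime_if_det_eq_1)
  then have "gcd (int \<delta> * (int d * p * c)) (int d * p * e) = \<bar>int d * p\<bar>"
    using gcd_mult_left[of "int d * p" "int \<delta> * c" e] by (simp add: ac_simps)
  then have "gcd (int \<delta> * (int d * p * c)) (int d * p * e) dvd int d * p * c"
    by simp
  moreover have "(k * a + j * (int \<delta> * c)) * (int d * p * e) - int \<delta> * (k * b + j * e) * (int d * p * c) \<noteq> 0"
    using reps_det[OF assms(1,3) M] assms(2) kjp by simp
  ultimately have "hermite_reducible \<delta> M (int d * p * e)"
    unfolding hermite_reducible_def using M by blast
  then show ?thesis
    by auto
qed

lemma reps_nonempty:
  assumes "\<delta> > 0" "d > 0" "d dvd \<delta>" "hermite_reducible \<delta> M L" "int d dvd L"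
  shows "reps \<delta> d M \<noteq> {}"
proof -
  obtain n1 l1 n2 where M: "M = mdelta \<delta> n1 l1 n2 L"
    and D: "n1 * L - int \<delta> * l1 * n2 \<noteq> 0" and g: "gcd (int \<delta> * n2) L dvd n2"
    using assms(4) unfolding hermite_reducible_def by blast
  obtain x c e where x: "\<bar>x\<bar> = gcd (int \<delta> * n2) L" and ce: "n2 = x * c" "L = x * e"
    and cop: "coprime (int \<delta> * c) e" and kpos: "n1 * e - l1 * (int \<delta> * c) > 0"
    using hermite_bottom_row_exists[OF D g] by blast
  define k where "k = n1 * e - l1 * (int \<delta> * c)"
  obtain a b j where abj: "a * e - b * (int \<delta> * c) = 1" "0 \<le> j" "j < k"
    "k * a + j * (int \<delta> * c) = n1" "k * b + j * e = l1"
    using hermite_top_row_exists[OF cop k_def[symmetric]] kpos unfolding k_def by blast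
  have "int d dvd \<bar>x\<bar>"
    unfolding x using assms(3,5) by simp
  then obtain p where p: "x = int d * p"
    by auto
  have "p \<noteq> 0"
    using D p ce by auto
  moreover have "M = mdelta \<delta> (k * a + j * (int \<delta> * c)) (k * b + j * e) (int d * p * c) (int d * p * e)"
    unfolding M ce p abj(4,5) ..
  ultimately have "(k, j, p, mat2 (of_int a) (of_int b) (of_int (int \<delta> * c)) (of_int e)) \<in> reps \<delta> d M"
    unfolding mem_reps_iff[OF assms(1)] using abj by blast
  then show ?thesis
    by blast
qed

lemma reps_unique:
  assumes "\<delta> > 0" "d > 0" "r \<in> reps \<delta> d M" "r' \<in> reps \<delta> d M"
  shows "r = r'"
proof -
  obtain k j p P k' j' p' P' where r: "r = (k, j, p, P)" and r': "r' = (k', j', p', P')"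
    using prod_cases4 by metis
  obtain a b c e where kjp: "0 \<le> j" "j < k" "p \<noteq> 0" and det: "a * e - b * (int \<delta> * c) = 1"
    and P: "P = mat2 (of_int a) (of_int b) (of_int (int \<delta> * c)) (of_int e)"
    and M: "M = mdelta \<delta> (k * a + j * (int \<delta> * c)) (k * b + j * e) (int d * p * c) (int d * p * e)"
    using assms(3) mem_reps_iff[OF assms(1)] unfolding r by blast
  obtain a' b' c' e' where kjp': "0 \<le> j'" "j' < k'" "p' \<noteq> 0" and det': "a' * e' - b' * (int \<delta> * c') = 1"
    and P': "P' = mat2 (of_int a') (of_int b') (of_int (int \<delta> * c')) (of_int e')"
    and M': "M = mdelta \<delta> (k' * a' + j' * (int \<delta> * c')) (k' * b' + j' * e') (int d * p' * c') (int d * p' * e')"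
    using assms(4) mem_reps_iff[OF assms(1)] unfolding r' by blast
  from trans[OF M[symmetric] M']
  have top: "k * a + j * (int \<delta> * c) = k' * a' + j' * (int \<delta> * c')" "k * b + j * e = k' * b' + j' * e'"
    and bottom: "int d * p * c = int d * p' * c'" "int d * p * e = int d * p' * e'"
    unfolding mdelta_eq_iff[OF assms(1)] by blast+
  have cop: "coprime (int \<delta> * c) e" "coprime (int \<delta> * c') e'"
    using coprime_if_det_eq_1[OF det] coprime_if_det_eq_1[OF det'] by blast+
  have dpk: "int d * p * k = int d * p' * k'"
    using reps_det[OF assms(1) assms(3)[unfolded r] M'] reps_det[OF assms(1) assms(4)[unfolded r'] M']
    by (rule trans[OF sym])
  have "int d * p = int d * p'"
    using cop bottom dpk kjp kjp'
    by (intro eq_of_primitive_multiples[of c e c' e' "int d * p" "int d * p'" k k']) simp_all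
  then have "p = p'" "c = c'" "e = e'" "k = k'"
    using assms(2) bottom kjp(3) dpk by simp_all
  moreover have "j = j' \<and> a = a' \<and> b = b'"
  proof (rule hermite_top_row_unique)
    show "k * a + j * (int \<delta> * c) = k * a' + j' * (int \<delta> * c)"
      "k * b + j * e = k * b' + j' * e"
      using top \<open>k = k'\<close> \<open>c = c'\<close> \<open>e = e'\<close> by simp_all
  qed (use cop kjp kjp' \<open>k = k'\<close> in simp_all)
  ultimately show ?thesis
    using r r' P P' by simp
qed

lemma card_reps:
  assumes "\<delta> > 0" "d > 0" "d dvd \<delta>"
  shows "finite (reps \<delta> d M)"
    and "card (reps \<delta> d M) = (if \<exists>L. hermite_reducible \<delta> M L \<and> int d dvd L then 1 else 0)"
proof -
  have "reps \<delta> d M = {} \<and> \<not> (\<exists>L. hermite_reducible \<delta> M L \<and> int d dvd L) \<or>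
        (\<exists>r. reps \<delta> d M = {r}) \<and> (\<exists>L. hermite_reducible \<delta> M L \<and> int d dvd L)"
  proof (cases "reps \<delta> d M = {}")
    case False
    then obtain k j p P where r: "(k, j, p, P) \<in> reps \<delta> d M"
      by auto
    then have "reps \<delta> d M = {(k, j, p, P)}"
      using reps_unique[OF assms(1,2)] by blast
    with r show ?thesis
      using reps_imp_hermite_reducible[OF assms(1,2) r] by blast
  qed (use reps_nonempty[OF assms] in blast)
  then show "finite (reps \<delta> d M)"
    and "card (reps \<delta> d M) = (if \<exists>L. hermite_reducible \<delta> M L \<and> int d dvd L then 1 else 0)"
    by auto
qed

lemma card_reps_prod_primes:
  assumes "\<delta> > 0" "S \<subseteq> prime_factors \<delta>"
  shows "finite (reps \<delta> (\<Prod>S) M)"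
    and "int (card (reps \<delta> (\<Prod>S) M)) =
      (if \<exists>L. hermite_reducible \<delta> M L \<and> int (\<Prod>S) dvd L then 1 else 0)"
  using card_reps[OF assms(1) prod_subset_prime_factors[OF assms]] by simp_all

lemma sum_Pow_hermite_reducible:
  assumes "\<delta> > 0"
  shows "(\<Sum>S\<in>Pow (prime_factors \<delta>). (-1) ^ card S *
            (if \<exists>L. hermite_reducible \<delta> M L \<and> int (\<Prod>S) dvd L then 1 else 0))
       = (if M \<in> LHS_set \<delta> then 1 else (0 :: int))"
proof (cases "\<exists>L. hermite_reducible \<delta> M L")
  case True
  then obtain L where L: "hermite_reducible \<delta> M L" ..
  let ?T = "{q. int q dvd L}"
  have iff: "(\<exists>L'. hermite_reducible \<delta> M L' \<and> int (\<Prod>S) dvd L') \<longleftrightarrow> S \<subseteq> ?T"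
    if "S \<in> Pow (prime_factors \<delta>)" for S
  proof -
    have "finite S" "\<And>p. p \<in> S \<Longrightarrow> prime p"
      using that by (auto intro: finite_subset)
    then have "int (\<Prod>S) dvd L \<longleftrightarrow> S \<subseteq> ?T"
      by (subst int_prod_primes_dvd_iff) auto
    then show ?thesis
      using hermite_reducible_unique[OF assms L] L by blast
  qed
  have "M \<in> LHS_set \<delta> \<longleftrightarrow> prime_factors \<delta> \<inter> ?T = {}"
    using mem_LHS_set_iff_hermite_reducible[OF assms] hermite_reducible_unique[OF assms L] L by blast
  then have "(if M \<in> LHS_set \<delta> then 1 else 0) =
      (\<Sum>S\<in>Pow (prime_factors \<delta>). (-1) ^ card S * (if S \<subseteq> ?T then 1 else 0 :: int))"
    by (simp add: sum_Pow_minus_one_card_subset)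
  also have "\<dots> = (\<Sum>S\<in>Pow (prime_factors \<delta>). (-1) ^ card S *
      (if \<exists>L. hermite_reducible \<delta> M L \<and> int (\<Prod>S) dvd L then 1 else 0))"
    by (rule sum.cong[OF refl]) (simp only: iff)
  finally show ?thesis ..
next
  case False
  then show ?thesis
    using mem_LHS_set_iff_hermite_reducible[OF assms] by simp
qed

theorem lemma4p5:
  fixes \<delta> :: nat
  assumes "\<delta> > 0"
  shows "\<forall>M :: qmat.
     (\<forall>l \<le> card (prime_factors \<delta>). \<forall>d \<in> C_set l \<delta>. finite (reps \<delta> d M)) \<and>
     (if M \<in> LHS_set \<delta> then 1 else 0 :: int) =
       (\<Sum>l \<le> card (prime_factors \<delta>). (-1) ^ l *
          (\<Sum>d \<in> C_set l \<delta>. int (card (reps \<delta> d M))))"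
proof (rule allI, rule conjI)
  fix M :: qmat
  show "\<forall>l \<le> card (prime_factors \<delta>). \<forall>d \<in> C_set l \<delta>. finite (reps \<delta> d M)"
  proof (intro allI impI ballI)
    fix l d
    assume "d \<in> C_set l \<delta>"
    then obtain S where "S \<subseteq> prime_factors \<delta>" "d = \<Prod>S"
      unfolding C_set_def by blast
    then show "finite (reps \<delta> d M)"
      using card_reps_prod_primes(1)[OF assms] by blast
  qed
  have "(if M \<in> LHS_set \<delta> then 1 else 0) = (\<Sum>S\<in>Pow (prime_factors \<delta>). (-1) ^ card S *
      (if \<exists>L. hermite_reducible \<delta> M L \<and> int (\<Prod>S) dvd L then 1 else 0 :: int))"
    by (rule sum_Pow_hermite_reducible[OF assms, symmetric])
  also have "\<dots> = (\<Sum>S\<in>Pow (prime_factors \<delta>). (-1) ^ card S * int (card (reps \<delta> (\<Prod>S) M)))"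
    by (rule sum.cong[OF refl]) (simp only: PowD card_reps_prod_primes(2)[OF assms])
  also have "\<dots> = (\<Sum>l \<le> card (prime_factors \<delta>). (-1) ^ l *
      (\<Sum>d \<in> C_set l \<delta>. int (card (reps \<delta> d M))))"
    by (rule sum_C_set_eq_sum_Pow[symmetric])
  finally show "(if M \<in> LHS_set \<delta> then 1 else 0 :: int) =
       (\<Sum>l \<le> card (prime_factors \<delta>). (-1) ^ l *
          (\<Sum>d \<in> C_set l \<delta>. int (card (reps \<delta> d M))))" .
qed

end
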